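(* Let $V$ be a Hilbert space of functions on a domain $\Omega\subset\mathbb{R}^d$ with a norm $\|\cdot\|$, let $\mathcal{T}_0$ be a (coarse) triangulation of $\Omega$, and for each $T\in\mathcal{T}_0$ let $\|\cdot\|_T$ be a norm on $V|_T$ with $\|v\|_T=\|v|_T\|$ for all $v\in V$. Let $V_0\subset\dots\subset V_L\subset V$ be nested finite element spaces, $u\in V$ the exact solution of a variational problem $a(u,v)=b(v)$ for all $v\in V$, and $u_k\in V_k$ the discrete solutions. Set $e_k:=u-u_k$, $\tilde e_k:=u_L-u_k$ and $\theta_{k,T}:=\|e_k\|_T/\|e_{k-1}\|_T$. Let $0<j<L$ be an integer and $\ell:=L-j$, and suppose there exist $\varepsilon>0$ and constants $\theta_T>0$, $T\in\mathcal{T}_0$, such that $$\theta_T\le\theta_{i,T}\le(1+\varepsilon)\theta_T<1\quad\text{for all }T\in\mathcal{T}_0\text{ and all } i \text{ with } \ell\le i\le L.$$ Define the unscaled local estimates $\eta'_{j,T}:=\|\tilde e_{L-j}\|_T$, the local effectivity indices $\gamma_T:=\eta'_{j,T}/\|e_L\|_T$, $\partial\gamma:=\max_{T\in\mathcal{T}_0}\gamma_T/\min_{T\in\mathcal{T}_0}\gamma_T$, and $$\theta_{\min}:=\min_{T\in\mathcal{T}_0}\theta_T,\qquad \theta_{\max}:=(1+\varepsilon)\max_{T\in\mathcal{T}_0}\theta_T.$$ Then $$\partial\gamma\le\frac{\theta_{\min}^{-j}+1}{\theta_{\max}^{-j}-1}.$$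
   Context: $a:V\times V\to\mathbb{R}$ is a bilinear form and $b:V\to\mathbb{R}$ a linear form; $u_k$ are the exact Galerkin solutions on the spaces $V_k$, which are associated with nested triangulations obtained from $\mathcal{T}_0$ by successive uniform refinement, so every $T\in\mathcal{T}_0$ is a union of fine elements. The quantities $\theta_{k,T}$ are local grid convergence factors and $\eta'_{j,T}$ is a local error indicator for $\|e_L\|_T$. *)

theory Defs
  imports "HOL-Analysis.Analysis"
begin

text \<open>The local norm \<open>v \<mapsto> \<parallel>v|_T\<parallel>_T\<close>
  of an element v of V is a seminorm on V (it vanishes exactly on functions
  vanishing on T).\<close>
definition local_seminorm :: "('v::real_vector \<Rightarrow> real) \<Rightarrow> bool" where
  "local_seminorm p \<longleftrightarrow>
     (\<forall>x y. p (x + y) \<le> p x + p y) \<and> (\<forall>c x. p (c *\<^sub>R x) = \<bar>c\<bar> * p x)"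

definition fin_dim_subspace :: "'v::real_vector set \<Rightarrow> bool" where
  "fin_dim_subspace S \<longleftrightarrow> subspace S \<and> (\<exists>B. finite B \<and> span B = S)"

definition galerkin_solution ::
  "('v \<Rightarrow> 'v \<Rightarrow> real) \<Rightarrow> ('v \<Rightarrow> real) \<Rightarrow> 'v set \<Rightarrow> 'v \<Rightarrow> bool" where
  "galerkin_solution a b S w \<longleftrightarrow> w \<in> S \<and> (\<forall>v\<in>S. a w v = b v)"

definition conv_factor ::
  "('v::real_vector \<Rightarrow> real) \<Rightarrow> 'v \<Rightarrow> (nat \<Rightarrow> 'v) \<Rightarrow> nat \<Rightarrow> real" where
  "conv_factor nT u uh k = nT (u - uh k) / nT (u - uh (k - 1))"

definition eff_index ::
  "('v::real_vector \<Rightarrow> real) \<Rightarrow> 'v \<Rightarrow> (nat \<Rightarrow> 'v) \<Rightarrow> nat \<Rightarrow> nat \<Rightarrow> real" where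
  "eff_index nT u uh L j = nT (uh L - uh (L - j)) / nT (u - uh L)"

end

theory Submission
  imports Defs
begin

text \<open>Write \<open>f k = \<parallel>u - u\<^sub>k\<parallel>\<^sub>T\<close>. The bounds on the convergence factors give
  \<open>\<theta>min\<^sup>j \<le> f L / f (L - j) \<le> \<theta>max\<^sup>j\<close> on every element. Since
  \<open>u\<^sub>L - u\<^sub>L\<^sub>-\<^sub>j = (u - u\<^sub>L\<^sub>-\<^sub>j) - (u - u\<^sub>L)\<close>, the triangle inequality puts each
  effectivity index within distance 1 of \<open>f (L - j) / f L\<close>, so all of them lie in
  \<open>[\<theta>max\<^sup>-\<^sup>j - 1, \<theta>min\<^sup>-\<^sup>j + 1]\<close>, whose lower end is positive as \<open>\<theta>max < 1\<close>.\<close>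

lemma inverse_power_le_inverse_power:
  fixes x y :: real
  assumes "0 < x" and "x \<le> y"
  shows "inverse y ^ n \<le> inverse x ^ n"
  using assms by (intro power_mono le_imp_inverse_le) simp_all

lemma local_seminorm_nonneg:
  assumes "local_seminorm p"
  shows "0 \<le> p x"
proof -
  have tri: "p (x + - x) \<le> p x + p (- x)" and hom: "\<And>c x. p (c *\<^sub>R x) = \<bar>c\<bar> * p x"
    using assms unfolding local_seminorm_def by blast+
  have "p 0 = 0" and "p (- x) = p x"
    using hom[of 0 x] hom[of "-1" x] by simp_all
  with tri show ?thesis by simp
qed

lemma local_seminorm_diff_bound:
  assumes "local_seminorm p"
  shows "\<bar>p (x - y) - p x\<bar> \<le> p y"
proof -
  have tri: "\<And>x y. p (x + y) \<le> p x + p y" and hom: "\<And>c x. p (c *\<^sub>R x) = \<bar>c\<bar> * p x"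
    using assms unfolding local_seminorm_def by blast+
  have neg: "p (- y) = p y" using hom[of "-1" y] by simp
  have "p x \<le> p (x - y) + p y" using tri[of "x - y" y] by simp
  moreover have "p (x - y) \<le> p x + p y" using tri[of x "- y"] neg by simp
  ultimately show ?thesis by linarith
qed

lemma eff_index_near_error_ratio:
  assumes "local_seminorm p" and "0 < p (u - uh L)"
  shows "\<bar>eff_index p u uh L j - p (u - uh (L - j)) / p (u - uh L)\<bar> \<le> 1"
proof -
  let ?eL = "u - uh L" and ?eLj = "u - uh (L - j)"
  have "uh L - uh (L - j) = ?eLj - ?eL" by simp
  then have "\<bar>p (uh L - uh (L - j)) - p ?eLj\<bar> \<le> p ?eL"
    using local_seminorm_diff_bound[OF assms(1)] by metis
  then have "\<bar>(p (uh L - uh (L - j)) - p ?eLj) / p ?eL\<bar> \<le> 1"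
    using assms(2) by (simp add: abs_divide)
  then show ?thesis unfolding eff_index_def by (simp add: diff_divide_distrib)
qed

lemma geometric_bounds_of_ratio_bounds:
  fixes f :: "nat \<Rightarrow> real"
  assumes c: "0 < c" and pos: "0 < f s"
    and ratio: "\<And>i. s < i \<Longrightarrow> i \<le> s + m \<Longrightarrow> c \<le> f i / f (i - 1) \<and> f i / f (i - 1) \<le> d"
  shows "0 < f (s + m) \<and> c ^ m * f s \<le> f (s + m) \<and> f (s + m) \<le> d ^ m * f s"
  using ratio
proof (induction m)
  case 0
  then show ?case using pos by simp
next
  case (Suc m)
  then have IH: "0 < f (s + m)" "c ^ m * f s \<le> f (s + m)" "f (s + m) \<le> d ^ m * f s"
    by simp_all
  have step: "c \<le> f (s + Suc m) / f (s + m)" "f (s + Suc m) / f (s + m) \<le> d"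
    using Suc.prems[of "s + Suc m"] by simp_all
  then have lower: "c * f (s + m) \<le> f (s + Suc m)" and upper: "f (s + Suc m) \<le> d * f (s + m)"
    using IH(1) by (simp_all add: pos_le_divide_eq pos_divide_le_eq)
  have "0 \<le> d" using step c by linarith
  have "c ^ Suc m * f s \<le> c * f (s + m)" using IH(2) c by simp
  moreover have "d * f (s + m) \<le> d ^ Suc m * f s"
    using mult_left_mono[OF IH(3) \<open>0 \<le> d\<close>] by (simp add: mult.assoc)
  moreover have "0 < c * f (s + m)" using c IH(1) by simp
  ultimately show ?case using lower upper by simp
qed

lemma eff_index_bounds_of_conv_factor_bounds:
  assumes p: "local_seminorm p" and c: "0 < c" and "j \<le> L"
    and conv: "\<And>i. L - j \<le> i \<Longrightarrow> i \<le> L \<Longrightarrow>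
      c \<le> conv_factor p u uh i \<and> conv_factor p u uh i \<le> d"
  shows "inverse d ^ j - 1 \<le> eff_index p u uh L j \<and> eff_index p u uh L j \<le> inverse c ^ j + 1"
proof -
  define f where "f k = p (u - uh k)" for k
  have ratio: "c \<le> f i / f (i - 1) \<and> f i / f (i - 1) \<le> d" if "L - j \<le> i" "i \<le> L" for i
    using conv[OF that] unfolding conv_factor_def f_def .
  have "f (L - j) \<noteq> 0" using ratio[of "L - j"] c \<open>j \<le> L\<close> by auto
  then have "0 < f (L - j)" using local_seminorm_nonneg[OF p] f_def by (simp add: order_less_le)
  then have geom: "0 < f L" "c ^ j * f (L - j) \<le> f L" "f L \<le> d ^ j * f (L - j)"
    using geometric_bounds_of_ratio_bounds[OF c, of f "L - j" j d] ratio \<open>j \<le> L\<close> by simp_all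
  have "0 < d" using ratio[of L] c by linarith
  have "f (L - j) / f L \<le> inverse c ^ j"
    using geom c by (simp add: divide_le_eq field_simps)
  moreover have "inverse d ^ j \<le> f (L - j) / f L"
    using geom \<open>0 < d\<close> by (simp add: le_divide_eq field_simps)
  moreover have "\<bar>eff_index p u uh L j - f (L - j) / f L\<bar> \<le> 1"
    using eff_index_near_error_ratio[OF p] geom(1) unfolding f_def by blast
  ultimately show ?thesis by linarith
qed

lemma Max_divide_Min_le:
  fixes g :: "'a \<Rightarrow> real"
  assumes "finite A" "A \<noteq> {}" "0 < lo" and bounds: "\<And>x. x \<in> A \<Longrightarrow> lo \<le> g x \<and> g x \<le> hi"
  shows "Max (g ` A) / Min (g ` A) \<le> hi / lo"
proof -
  have "Max (g ` A) \<le> hi" "lo \<le> Min (g ` A)" using assms by auto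
  moreover have "0 \<le> hi" using assms by fastforce
  ultimately show ?thesis using frac_le \<open>0 < lo\<close> by blast
qed

theorem corollary2:
  fixes a :: "'v::{real_inner, complete_space} \<Rightarrow> 'v \<Rightarrow> real"
    and b :: "'v \<Rightarrow> real"
    and u :: 'v
    and Vh :: "nat \<Rightarrow> 'v set"
    and uh :: "nat \<Rightarrow> 'v"
    and T0 :: "'T set"
    and nT :: "'T \<Rightarrow> 'v \<Rightarrow> real"
    and L j :: nat
    and \<epsilon> :: real
    and \<theta> :: "'T \<Rightarrow> real"
  assumes bil: "bilinear a"
    and lin: "linear b"
    and exact: "\<forall>v. a u v = b v"
    and spaces: "\<forall>k. fin_dim_subspace (Vh k)"
    and nested: "\<forall>k. Vh k \<subseteq> Vh (Suc k)"
    and discrete: "\<forall>k. galerkin_solution a b (Vh k) (uh k)"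
    and T0_fin: "finite T0" and T0_ne: "T0 \<noteq> {}"
    and local_norms: "\<forall>T\<in>T0. local_seminorm (nT T)"
    and j_pos: "0 < j" and j_lt: "j < L"
    and eps_pos: "\<epsilon> > 0"
    and theta_pos: "\<forall>T\<in>T0. \<theta> T > 0"
    and theta_bounds: "\<forall>T\<in>T0. \<forall>i. L - j \<le> i \<and> i \<le> L \<longrightarrow>
          \<theta> T \<le> conv_factor (nT T) u uh i \<and>
          conv_factor (nT T) u uh i \<le> (1 + \<epsilon>) * \<theta> T \<and>
          (1 + \<epsilon>) * \<theta> T < 1"
  shows "Max ((\<lambda>T. eff_index (nT T) u uh L j) ` T0)
           / Min ((\<lambda>T. eff_index (nT T) u uh L j) ` T0)
         \<le> (inverse (Min (\<theta> ` T0)) ^ j + 1)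
           / (inverse ((1 + \<epsilon>) * Max (\<theta> ` T0)) ^ j - 1)"
proof -
  let ?\<gamma> = "\<lambda>T. eff_index (nT T) u uh L j"
  define \<theta>min where "\<theta>min = Min (\<theta> ` T0)"
  define \<theta>max where "\<theta>max = (1 + \<epsilon>) * Max (\<theta> ` T0)"
  have "Max (\<theta> ` T0) \<in> \<theta> ` T0" using T0_fin T0_ne by simp
  then obtain T' where "T' \<in> T0" and "Max (\<theta> ` T0) = \<theta> T'" by blast
  then have "0 < \<theta>max" "\<theta>max < 1"
    using theta_pos eps_pos theta_bounds[rule_format, of T' L] j_lt unfolding \<theta>max_def by auto
  then have lower_pos: "0 < inverse \<theta>max ^ j - 1"
    using j_pos by (simp add: one_less_inverse one_less_power)
  have "0 < \<theta>min"
    using Min_in[of "\<theta> ` T0"] T0_fin T0_ne theta_pos unfolding \<theta>min_def by auto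
  have "inverse \<theta>max ^ j - 1 \<le> ?\<gamma> T \<and> ?\<gamma> T \<le> inverse \<theta>min ^ j + 1" if T: "T \<in> T0" for T
  proof -
    have "0 < \<theta> T" using T theta_pos by blast
    have "\<theta>min \<le> \<theta> T" "(1 + \<epsilon>) * \<theta> T \<le> \<theta>max"
      unfolding \<theta>min_def \<theta>max_def using T0_fin T eps_pos by simp_all
    have "inverse ((1 + \<epsilon>) * \<theta> T) ^ j - 1 \<le> ?\<gamma> T \<and> ?\<gamma> T \<le> inverse (\<theta> T) ^ j + 1"
      using local_norms theta_bounds T
      by (intro eff_index_bounds_of_conv_factor_bounds) (simp_all add: \<open>0 < \<theta> T\<close> less_imp_le j_lt)
    moreover have "inverse \<theta>max ^ j \<le> inverse ((1 + \<epsilon>) * \<theta> T) ^ j"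
      using \<open>0 < \<theta> T\<close> eps_pos \<open>(1 + \<epsilon>) * \<theta> T \<le> \<theta>max\<close>
      by (intro inverse_power_le_inverse_power) simp_all
    moreover have "inverse (\<theta> T) ^ j \<le> inverse \<theta>min ^ j"
      using \<open>0 < \<theta>min\<close> \<open>\<theta>min \<le> \<theta> T\<close> by (rule inverse_power_le_inverse_power)
    ultimately show ?thesis by linarith
  qed
  from Max_divide_Min_le[OF T0_fin T0_ne lower_pos this]
  show ?thesis unfolding \<theta>min_def \<theta>max_def .
qed

end
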